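(* Fix $\tau\in(V_{j-1},V_j)$ for some $1\le j\le n$. For all sufficiently large $\chi$, the function $S_{\tau,\chi}$ has no non-real critical points if $\beta_j=\pm1$, and exactly two non-real critical points, which are complex conjugates of each other, if $\beta_j\neq\pm1$.
   Context: Let $V_0<V_1<\dots<V_n$, $\beta_1,\dots,\beta_n\in[-1,1]$, $\beta_0:=-1$, $\beta_{n+1}:=1$, with $\beta_i\ne\beta_{i+1}$ for all $0\le i\le n$. Let $V:[V_0,V_n]\to\mathbb R$ be continuous and linear with slope $\beta_i$ on $[V_{i-1},V_i]$. For $\tau\in[V_0,V_n]$, $\chi\in\mathbb R$ and $z\in\mathbb C\setminus\mathbb R$ define $$S_{\tau,\chi}(z)=\int_{V_0}^{\tau}\tfrac12(1+V'(M))\ln(1-e^{M}z^{-1})\,dM-\int_{\tau}^{V_n}\tfrac12(1-V'(M))\ln(1-e^{-M}z)\,dM-\big(\chi-\tfrac12V(\tau)\big)\ln z,$$ with $\ln$ the principal branch. A non-real critical point of $S_{\tau,\chi}$ is a $z\in\mathbb C\setminus\mathbb R$ with $S_{\tau,\chi}'(z)=0$. *)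

theory Defs
  imports "HOL-Analysis.Analysis"
begin

definition pl_setting ::
  "nat \<Rightarrow> (nat \<Rightarrow> real) \<Rightarrow> (nat \<Rightarrow> real) \<Rightarrow> (real \<Rightarrow> real) \<Rightarrow> bool" where
  "pl_setting n Vs beta V \<longleftrightarrow>
     (\<forall>i<n. Vs i < Vs (Suc i)) \<and>
     (\<forall>i\<in>{1..n}. beta i \<in> {-1..1}) \<and>
     beta 0 = -1 \<and> beta (Suc n) = 1 \<and>
     (\<forall>i\<le>n. beta i \<noteq> beta (Suc i)) \<and>
     (\<forall>i\<in>{1..n}. \<forall>M\<in>{Vs (i-1)..Vs i}. V M = V (Vs (i-1)) + beta i * (M - Vs (i-1)))"

text \<open>The action S_{tau,chi}(z); Ln is the principal branch of the complex logarithm,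
  and V' is the derivative of V (defined away from the finitely many breakpoints).\<close>

definition S_fun ::
  "nat \<Rightarrow> (nat \<Rightarrow> real) \<Rightarrow> (real \<Rightarrow> real) \<Rightarrow> real \<Rightarrow> real \<Rightarrow> complex \<Rightarrow> complex" where
  "S_fun n Vs V tau chi z =
     integral {Vs 0..tau}
       (\<lambda>M. complex_of_real ((1 + deriv V M) / 2) * Ln (1 - exp (complex_of_real M) / z))
   - integral {tau..Vs n}
       (\<lambda>M. complex_of_real ((1 - deriv V M) / 2) * Ln (1 - exp (- complex_of_real M) * z))
   - complex_of_real (chi - V tau / 2) * Ln z"

definition nonreal_crit_points ::
  "nat \<Rightarrow> (nat \<Rightarrow> real) \<Rightarrow> (real \<Rightarrow> real) \<Rightarrow> real \<Rightarrow> real \<Rightarrow> complex set" where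
  "nonreal_crit_points n Vs V tau chi =
     {z. Im z \<noteq> 0 \<and> (S_fun n Vs V tau chi has_field_derivative 0) (at z)}"

end

theory Submission
  imports Defs
begin

text \<open>Differentiating under the integral sign and integrating in \<open>M\<close> gives
  \<open>z S'(z) = \<Lambda>(z) - (\<chi> - V(\<tau>)/2)\<close>, where \<open>\<Lambda>\<close> commutes with conjugation and, on the upper
  half-plane, is up to a real constant the logarithmic sum \<open>G(z) = \<Sum>\<^sub>k c\<^sub>k Ln (z - p\<^sub>k)\<close>: the points
  \<open>p\<^sub>k\<close> are the exponentials of the breakpoints with \<open>\<tau>\<close> inserted, and the weights \<open>c\<^sub>k\<close> are
  differences of the coefficients \<open>(1 \<plusminus> V')/2\<close>, so they sum to \<open>0\<close> and \<open>c\<^sub>j = -1\<close> at \<open>p\<^sub>j = e\<^sup>\<tau>\<close>.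
  So one counts the solutions of \<open>G(z) = Y\<close> with \<open>Im z > 0\<close> for large real \<open>Y\<close>.

  Since \<open>\<Sum> c\<^sub>k = 0\<close>, \<open>Re G\<close> is bounded above away from the points of negative weight, so every
  solution lies near such a point \<open>p\<^sub>m\<close>. There \<open>Im G \<approx> -c\<^sub>m arg (z - p\<^sub>m) + \<pi> \<Sum>\<^sub>k\<^sub>>\<^sub>m c\<^sub>k\<close>,
  which cannot vanish unless \<open>0 < \<Sum>\<^sub>k\<^sub>>\<^sub>m c\<^sub>k < -c\<^sub>m\<close>. For our weights this happens only at
  \<open>m = j\<close>, and only if \<open>\<Sum>\<^sub>k\<^sub>>\<^sub>j c\<^sub>k = (1 - \<beta>\<^sub>j)/2\<close> lies strictly between \<open>0\<close> and \<open>1\<close>, i.e.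
  \<open>\<beta>\<^sub>j \<noteq> \<plusminus>1\<close>; near \<open>p\<^sub>j\<close> the equation is a contraction in \<open>w = Ln (z - p\<^sub>j)\<close> and has exactly one
  solution.\<close>

section \<open>Estimates for logarithms\<close>

lemma Im_Ln_lower_bounds:
  assumes "Im u > 0"
  shows "Im u / norm u \<le> Im (Ln u)" "Im u / norm u \<le> pi - Im (Ln u)"
proof -
  have u0: "u \<noteq> 0" using assms by auto
  have range: "0 < Im (Ln u)" "Im (Ln u) < pi" using Im_Ln_pos_lt_imp[OF assms] by auto
  have sin: "sin (Im (Ln u)) = Im u / norm u"
    using sin_Arg[OF u0] by (simp add: Arg_eq_Im_Ln[OF u0])
  show "Im u / norm u \<le> Im (Ln u)" using sin sin_x_le_x[of "Im (Ln u)"] range by simp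
  show "Im u / norm u \<le> pi - Im (Ln u)" using sin sin_x_le_x[of "pi - Im (Ln u)"] range by simp
qed

lemma Im_Ln_le_of_Re_ge:
  assumes u: "Im u > 0" and r: "0 < r" "r \<le> Re u" shows "Im (Ln u) \<le> Im u / r"
proof -
  have "Im (Ln u) = arctan (Im u / Re u)"
    using arg_conv_arctan[of u] Arg_eq_Im_Ln[of u] u r by fastforce
  also have "\<dots> \<le> Im u / Re u" using u r by (intro arctan_le_self) simp
  also have "\<dots> \<le> Im u / r" using u r by (intro divide_left_mono) auto
  finally show ?thesis .
qed

lemma pi_minus_Im_Ln_le_of_Re_le:
  assumes u: "Im u > 0" and r: "0 < r" "Re u \<le> - r" shows "pi - Im (Ln u) \<le> Im u / r"
proof -
  have u0: "u \<noteq> 0" using u by auto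
  have "Arg (-u) = Arg u - pi"
    using Arg_minus[OF u0] Im_Ln_pos_lt_imp[OF u] Arg_eq_Im_Ln[OF u0] by auto
  moreover have "Arg (-u) = arctan (Im (-u) / Re (-u))"
    using arg_conv_arctan[of "-u"] r by simp
  ultimately have "pi - Im (Ln u) = arctan (Im u / (- Re u))"
    using Arg_eq_Im_Ln[OF u0] by (simp add: arctan_minus)
  also have "\<dots> \<le> Im u / (- Re u)" using u r by (intro arctan_le_self divide_nonneg_pos) auto
  also have "\<dots> \<le> Im u / r" using u r by (intro divide_left_mono) (auto simp: mult_neg_pos)
  finally show ?thesis .
qed

lemma abs_ln_le_of_bounds:
  fixes a lo hi :: real
  assumes "0 < lo" "lo \<le> a" "a \<le> hi"
  shows "\<bar>ln a\<bar> \<le> hi + 1 / lo"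
proof -
  have "ln a \<le> a - 1" "- ln a \<le> 1 / a - 1"
    using assms ln_le_minus_one[of "1 / a"] by (auto intro!: ln_le_minus_one simp: ln_div)
  moreover have "1 / a \<le> 1 / lo" "0 < 1 / lo" using assms by (simp_all add: frac_le)
  ultimately show ?thesis using assms by linarith
qed

section \<open>Level sets of logarithmic sums\<close>

definition log_sum :: "nat \<Rightarrow> (nat \<Rightarrow> real) \<Rightarrow> (nat \<Rightarrow> real) \<Rightarrow> complex \<Rightarrow> complex" where
  "log_sum N c p z = (\<Sum>k\<le>N. of_real (c k) * Ln (z - of_real (p k)))"

lemma Re_log_sum:
  assumes "Im z \<noteq> 0"
  shows "Re (log_sum N c p z) = (\<Sum>k\<le>N. c k * ln (norm (z - of_real (p k))))"
proof -
  have "z - of_real (p k) \<noteq> 0" for k using assms by auto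
  then show ?thesis unfolding log_sum_def Re_sum by (simp add: Re_Ln)
qed

lemma Im_log_sum: "Im (log_sum N c p z) = (\<Sum>k\<le>N. c k * Im (Ln (z - of_real (p k))))"
  unfolding log_sum_def Im_sum by simp

lemma uniform_gap:
  fixes p :: "nat \<Rightarrow> real"
  assumes "\<And>k. k < N \<Longrightarrow> p k < p (Suc k)"
  obtains d where "d > 0" "\<And>k. k < N \<Longrightarrow> p k + d \<le> p (Suc k)"
proof
  let ?d = "Min (insert 1 ((\<lambda>k. p (Suc k) - p k) ` {..<N}))"
  show "?d > 0" using assms by (subst Min_gr_iff) auto
  show "p k + ?d \<le> p (Suc k)" if "k < N" for k
  proof -
    have "?d \<le> p (Suc k) - p k" using that by (intro Min_le) auto
    then show ?thesis by simp
  qed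
qed

lemma gap_accumulates:
  fixes p :: "nat \<Rightarrow> real"
  assumes "d \<ge> 0" "\<And>k. k < N \<Longrightarrow> p k + d \<le> p (Suc k)"
  shows "k < m \<Longrightarrow> m \<le> N \<Longrightarrow> p k + d \<le> p m"
proof (induction m)
  case (Suc m)
  show ?case
  proof (cases "k = m")
    case False
    then have "p k + d \<le> p m" using Suc by simp
    also have "p m \<le> p (Suc m)" using assms Suc.prems by (metis Suc_le_lessD le_add_same_cancel1 order_trans)
    finally show ?thesis .
  qed (use assms Suc.prems in simp)
qed simp

lemma dist_other_point_ge_half_gap:
  fixes p :: "nat \<Rightarrow> real" and z :: complex
  assumes "d \<ge> 0" "\<And>k. k < N \<Longrightarrow> p k + d \<le> p (Suc k)"
    and "k \<le> N" "m \<le> N" "k \<noteq> m" "norm (z - of_real (p m)) \<le> d / 2"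
  shows "d / 2 \<le> norm (z - of_real (p k))"
proof -
  have "d \<le> \<bar>p m - p k\<bar>"
    using gap_accumulates[of d N p k m] gap_accumulates[of d N p m k] assms(1-5)
    by (cases "k < m") auto
  also have "\<dots> = norm (of_real (p m - p k) :: complex)"
    by (simp only: norm_of_real)
  also have "\<dots> = norm ((z - of_real (p k)) - (z - of_real (p m)))"
    by (simp add: algebra_simps)
  also have "\<dots> \<le> norm (z - of_real (p k)) + norm (z - of_real (p m))"
    by (rule norm_triangle_ineq4)
  finally show ?thesis using assms(6) by simp
qed


lemma sum_times_step_function:
  fixes c :: "nat \<Rightarrow> real"
  assumes "m \<le> N"
  shows "(\<Sum>k\<le>N. c k * (if k < m then 0 else if k = m then t else a)) = c m * t + a * (\<Sum>k\<in>{m<..N}. c k)"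
proof -
  have "c k * (if k < m then 0 else if k = m then t else a)
      = (if k = m then c m * t else 0) + (if m < k then a * c k else 0)" for k
    by simp
  then have "(\<Sum>k\<le>N. c k * (if k < m then 0 else if k = m then t else a))
      = (\<Sum>k\<le>N. if k = m then c m * t else 0) + (\<Sum>k\<le>N. if m < k then a * c k else 0)"
    by (simp add: sum.distrib)
  also have "(\<Sum>k\<le>N. if m < k then a * c k else 0) = (\<Sum>k\<in>{k\<in>{..N}. m < k}. a * c k)"
    by (rule sum.inter_filter[symmetric]) simp
  also have "{k\<in>{..N}. m < k} = {m<..N}" by auto
  finally show ?thesis using assms by (simp add: sum_distrib_left)
qed

lemma Im_log_sum_near_point:
  fixes c p :: "nat \<Rightarrow> real" and z :: complex
  assumes d: "d > 0" and gaps: "\<And>k. k < N \<Longrightarrow> p k + d \<le> p (Suc k)" and m: "m \<le> N"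
    and z: "Im z > 0" "norm (z - of_real (p m)) \<le> d / 2"
  shows "\<bar>Im (log_sum N c p z) - (c m * Im (Ln (z - of_real (p m))) + pi * (\<Sum>k\<in>{m<..N}. c k))\<bar>
           \<le> (\<Sum>k\<le>N. \<bar>c k\<bar>) * (2 * Im z / d)"
proof -
  define \<theta> where "\<theta> k = Im (Ln (z - of_real (p k)))" for k
  define \<theta>\<^sub>0 where "\<theta>\<^sub>0 k = (if k < m then 0 else if k = m then \<theta> m else pi)" for k
  have "\<bar>Re z - p m\<bar> \<le> d / 2"
    using z(2) abs_Re_le_cmod[of "z - of_real (p m)"] by simp
  then have Re_z: "p m - d / 2 \<le> Re z" "Re z \<le> p m + d / 2" by linarith+
  have deviation: "\<bar>\<theta> k - \<theta>\<^sub>0 k\<bar> \<le> 2 * Im z / d" if k: "k \<le> N" for k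
  proof -
    let ?u = "z - of_real (p k)"
    have range: "0 < \<theta> k" "\<theta> k < pi" using Im_Ln_pos_lt_imp[of ?u] z(1) by (auto simp: \<theta>_def)
    consider "k < m" | "k = m" | "m < k" by linarith
    then show ?thesis
    proof cases
      case 1
      then have "p k + d \<le> p m" using gap_accumulates[of d N p k m] d gaps m by simp
      then have "d / 2 \<le> Re ?u" using Re_z by simp
      then have "\<theta> k \<le> Im z / (d / 2)" using Im_Ln_le_of_Re_ge[of ?u "d / 2"] z(1) d by (simp add: \<theta>_def)
      then show ?thesis using 1 range by (simp add: \<theta>\<^sub>0_def mult.commute)
    next
      case 3
      then have "p m + d \<le> p k" using gap_accumulates[of d N p m k] d gaps k by simp
      then have "Re ?u \<le> - (d / 2)" using Re_z by simp
      then have "pi - \<theta> k \<le> Im z / (d / 2)"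
        using pi_minus_Im_Ln_le_of_Re_le[of ?u "d / 2"] z(1) d by (simp add: \<theta>_def)
      then show ?thesis using 3 range by (simp add: \<theta>\<^sub>0_def mult.commute)
    qed (use z d in \<open>simp add: \<theta>\<^sub>0_def\<close>)
  qed
  have "Im (log_sum N c p z) - (c m * \<theta> m + pi * (\<Sum>k\<in>{m<..N}. c k)) = (\<Sum>k\<le>N. c k * (\<theta> k - \<theta>\<^sub>0 k))"
    using sum_times_step_function[OF m, of c "\<theta> m" pi]
    by (simp add: right_diff_distrib sum_subtractf Im_log_sum \<theta>_def \<theta>\<^sub>0_def)
  also have "\<bar>\<dots>\<bar> \<le> (\<Sum>k\<le>N. \<bar>c k\<bar> * (2 * Im z / d))"
    by (rule order_trans[OF sum_abs sum_mono])
      (auto simp: abs_mult simp del: times_divide_eq_right intro!: mult_left_mono deviation)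
  finally show ?thesis by (simp add: \<theta>_def sum_distrib_right sum_divide_distrib)
qed

lemma Im_log_sum_nonzero_near_point:
  fixes c p :: "nat \<Rightarrow> real" and z :: complex
  assumes d: "d > 0" and gaps: "\<And>k. k < N \<Longrightarrow> p k + d \<le> p (Suc k)" and m: "m \<le> N" "c m < 0"
    and tail: "(\<Sum>k\<in>{m<..N}. c k) \<le> 0 \<or> - c m \<le> (\<Sum>k\<in>{m<..N}. c k)"
    and z: "Im z > 0" "norm (z - of_real (p m)) < \<delta>"
    and \<delta>: "\<delta> \<le> d / 2" "\<delta> * (2 * (\<Sum>k\<le>N. \<bar>c k\<bar>)) \<le> - c m * d"
  shows "Im (log_sum N c p z) \<noteq> 0"
proof -
  define \<theta> where "\<theta> = Im (Ln (z - of_real (p m)))"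
  define s where "s = (\<Sum>k\<in>{m<..N}. c k)"
  define r where "r = norm (z - of_real (p m))"
  define E where "E = Im (log_sum N c p z) - (c m * \<theta> + pi * s)"
  have r: "0 < r" "r < \<delta>" using z by (auto simp: r_def)
  have "\<bar>E\<bar> \<le> (\<Sum>k\<le>N. \<bar>c k\<bar>) * (2 * Im z / d)"
    unfolding E_def \<theta>_def s_def using Im_log_sum_near_point[where p=p and N=N and c=c, OF d gaps m(1) z(1)] z(2) \<delta>(1) by simp
  also have "\<dots> = (\<delta> * (2 * (\<Sum>k\<le>N. \<bar>c k\<bar>))) * Im z / (\<delta> * d)"
    using r d by (simp add: field_simps)
  also have "\<dots> \<le> (- c m * d) * Im z / (\<delta> * d)"
    using \<delta>(2) r d z(1) by (intro divide_right_mono mult_right_mono) auto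
  also have "\<dots> = - c m * (Im z / \<delta>)" using d by simp
  also have "\<dots> < - c m * (Im z / r)"
    using r m(2) z(1) by (intro mult_strict_left_mono divide_strict_left_mono) auto
  finally have E: "\<bar>E\<bar> < - c m * (Im z / r)" .
  have arg: "Im z / r \<le> \<theta>" "Im z / r \<le> pi - \<theta>"
    using Im_Ln_lower_bounds[of "z - of_real (p m)"] z(1) by (simp_all add: \<theta>_def r_def)
  have lower1: "- c m * (Im z / r) \<le> - c m * \<theta>"
    by (rule mult_left_mono) (use arg m(2) in auto)
  have lower2: "- c m * (Im z / r) \<le> - c m * (pi - \<theta>)"
    by (rule mult_left_mono) (use arg m(2) in auto)
  from tail[folded s_def] show ?thesis
  proof
    assume "s \<le> 0"
    then have "pi * s \<le> 0" by (simp add: mult_nonneg_nonpos)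
    then have "Im (log_sum N c p z) < 0" using E lower1 unfolding E_def by linarith
    then show ?thesis by simp
  next
    assume "- c m \<le> s"
    then have "pi * (- c m) \<le> pi * s" by (intro mult_left_mono) auto
    moreover have "- c m * (pi - \<theta>) = pi * (- c m) + c m * \<theta>" by (simp add: algebra_simps)
    ultimately have "0 < Im (log_sum N c p z)" using E lower2 unfolding E_def by linarith
    then show ?thesis by simp
  qed
qed

lemma Re_log_sum_le_away_from_negative_points:
  fixes c p :: "nat \<Rightarrow> real" and z :: complex
  assumes sum0: "(\<Sum>k\<le>N. c k) = 0" and \<delta>: "\<delta> > 0" and z: "Im z \<noteq> 0"
    and P: "\<And>k. k \<le> N \<Longrightarrow> \<bar>p k\<bar> \<le> P"
    and far: "\<And>k. k \<le> N \<Longrightarrow> c k < 0 \<Longrightarrow> \<delta> \<le> norm (z - of_real (p k))"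
  shows "Re (log_sum N c p z) \<le> (\<Sum>k\<le>N. \<bar>c k\<bar>) * ln (1 + 2 * P / \<delta>)"
proof -
  define b where "b = norm z + P"
  have "Re (log_sum N c p z) = (\<Sum>k\<le>N. c k * (ln (norm (z - of_real (p k))) - ln b))"
    using sum0 by (simp add: Re_log_sum[OF z] right_diff_distrib sum_subtractf flip: sum_distrib_right)
  also have "\<dots> \<le> (\<Sum>k\<le>N. \<bar>c k\<bar> * ln (1 + 2 * P / \<delta>))"
  proof (rule sum_mono)
    fix k assume k: "k \<in> {..N}"
    define a where "a = norm (z - of_real (p k))"
    have "norm (of_real (p k) :: complex) \<le> P" using P k by simp
    then have a: "0 < a" "a \<le> b" "b \<le> a + 2 * P" "0 \<le> P"
      using z norm_triangle_ineq4[of z "of_real (p k)"] norm_triangle_sub[of z "of_real (p k)"]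
      by (auto simp: a_def b_def)
    show "c k * (ln a - ln b) \<le> \<bar>c k\<bar> * ln (1 + 2 * P / \<delta>)"
    proof (cases "c k < 0")
      case True
      have "b / a \<le> 1 + 2 * P / a" using a by (simp add: field_simps)
      also have "\<dots> \<le> 1 + 2 * P / \<delta>" using a far[of k] k True \<delta> by (simp add: a_def frac_le)
      finally have "b / a \<le> 1 + 2 * P / \<delta>" .
      then have "ln (b / a) \<le> ln (1 + 2 * P / \<delta>)" using a by (intro ln_mono) auto
      then have "ln b - ln a \<le> ln (1 + 2 * P / \<delta>)" using a by (simp add: ln_div)
      then have "- c k * (ln b - ln a) \<le> - c k * ln (1 + 2 * P / \<delta>)"
        using True by (intro mult_left_mono) auto
      then show ?thesis using True by (simp add: algebra_simps)
    next
      case False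
      then have "c k * (ln a - ln b) \<le> 0" using a by (simp add: mult_nonneg_nonpos)
      also have "0 \<le> \<bar>c k\<bar> * ln (1 + 2 * P / \<delta>)" using a \<delta> by simp
      finally show ?thesis .
    qed
  qed
  finally show ?thesis by (simp add: sum_distrib_right)
qed

lemma log_sum_real_value_near_negative_point:
  fixes c p :: "nat \<Rightarrow> real"
  assumes sum0: "(\<Sum>k\<le>N. c k) = 0" and \<delta>: "\<delta> > 0"
  shows "\<forall>\<^sub>F Y in at_top. \<forall>z. Im z \<noteq> 0 \<longrightarrow> log_sum N c p z = of_real Y \<longrightarrow>
           (\<exists>k\<le>N. c k < 0 \<and> norm (z - of_real (p k)) < \<delta>)"
proof -
  define P where "P = (\<Sum>k\<le>N. \<bar>p k\<bar>)"
  have P: "\<bar>p k\<bar> \<le> P" if "k \<le> N" for k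
    unfolding P_def using that by (intro member_le_sum) auto
  show ?thesis
  proof (rule eventually_mono[OF eventually_gt_at_top], intro allI impI)
    fix Y z
    assume Y: "(\<Sum>k\<le>N. \<bar>c k\<bar>) * ln (1 + 2 * P / \<delta>) < Y"
      and z: "Im z \<noteq> 0" "log_sum N c p z = of_real Y"
    show "\<exists>k\<le>N. c k < 0 \<and> norm (z - of_real (p k)) < \<delta>"
    proof (rule ccontr)
      assume "\<not> ?thesis"
      then have far: "\<And>k. k \<le> N \<Longrightarrow> c k < 0 \<Longrightarrow> \<delta> \<le> norm (z - of_real (p k))" by force
      have "Y = Re (log_sum N c p z)" using z(2) by simp
      also have "\<dots> \<le> (\<Sum>k\<le>N. \<bar>c k\<bar>) * ln (1 + 2 * P / \<delta>)"
        by (rule Re_log_sum_le_away_from_negative_points[OF sum0 \<delta> z(1) P far])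
      finally show False using Y by simp
    qed
  qed
qed

lemma contraction_unique_fixpoint:
  fixes T :: "'a::{real_normed_field, banach} \<Rightarrow> 'a"
  assumes D: "closed D" "convex D" "D \<noteq> {}" "T ` D \<subseteq> D" and \<epsilon>: "0 \<le> \<epsilon>" "\<epsilon> < 1"
    and deriv: "\<And>w. w \<in> D \<Longrightarrow> (T has_field_derivative T' w) (at w within D)"
    and bound: "\<And>w. w \<in> D \<Longrightarrow> norm (T' w) \<le> \<epsilon>"
  shows "\<exists>!w\<in>D. T w = w"
proof (rule Banach_fix[OF _ D(3) \<epsilon> D(4)])
  show "complete D" using D(1) by (simp add: complete_eq_closed)
  show "dist (T x) (T y) \<le> \<epsilon> * dist x y" if "x \<in> D" "y \<in> D" for x y
    using field_differentiable_bound[OF D(2) deriv bound that] by (simp add: dist_norm)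
qed

definition half_strip :: "real \<Rightarrow> real \<Rightarrow> complex set" where
  "half_strip r \<epsilon> = {w. Re w \<le> r \<and> \<epsilon> \<le> Im w \<and> Im w \<le> pi - \<epsilon>}"

lemma closed_half_strip: "closed (half_strip r \<epsilon>)"
  unfolding half_strip_def Collect_conj_eq
  by (intro closed_Int closed_halfspace_Re_le closed_halfspace_Im_ge closed_halfspace_Im_le)

lemma convex_half_strip: "convex (half_strip r \<epsilon>)"
  unfolding half_strip_def Collect_conj_eq
  by (intro convex_Int convex_halfspace_Re_le convex_halfspace_Im_ge convex_halfspace_Im_le)

lemma half_strip_nonempty: "\<epsilon> < 1 \<Longrightarrow> half_strip r \<epsilon> \<noteq> {}"
  using pi_gt3 by (auto simp: half_strip_def intro!: exI[of _ "Complex r (pi / 2)"])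

lemma exp_half_strip:
  assumes "0 < \<epsilon>" "w \<in> half_strip r \<epsilon>" shows "0 < Im (exp w)" "norm (exp w) \<le> exp r"
proof -
  have "0 < sin (Im w)" using assms by (intro sin_gt_zero) (auto simp: half_strip_def)
  then show "0 < Im (exp w)" by (simp add: Im_exp)
  show "norm (exp w) \<le> exp r" using assms by (simp add: half_strip_def norm_exp_eq_Re)
qed

text \<open>In the variable \<open>w = Ln (z - a)\<close> the equation \<open>h z - Ln (z - a) = Y\<close> becomes the
  fixed-point equation \<open>w = h (a + exp w) - Y\<close>, and this map contracts the half-strip
  \<open>half_strip (ln \<rho>) \<epsilon>\<close> into itself.\<close>

context
  fixes h h' :: "complex \<Rightarrow> complex" and a \<rho> \<epsilon> H Y :: real
  assumes \<rho>: "\<rho> > 0" and \<epsilon>: "0 < \<epsilon>" "\<epsilon> < 1"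
    and deriv: "\<And>z. Im z > 0 \<Longrightarrow> norm (z - of_real a) \<le> \<rho> \<Longrightarrow> (h has_field_derivative h' z) (at z)"
    and deriv_bound: "\<And>z. Im z > 0 \<Longrightarrow> norm (z - of_real a) \<le> \<rho> \<Longrightarrow> norm (h' z) * \<rho> \<le> \<epsilon>"
    and Im_h: "\<And>z. Im z > 0 \<Longrightarrow> norm (z - of_real a) \<le> \<rho> \<Longrightarrow> \<epsilon> \<le> Im (h z) \<and> Im (h z) \<le> pi - \<epsilon>"
    and Re_h: "\<And>z. Im z > 0 \<Longrightarrow> norm (z - of_real a) \<le> \<rho> \<Longrightarrow> Re (h z) \<le> H"
    and Y: "H - ln (\<rho> / 2) \<le> Y"
begin

lemma Ln_perturbation_fixpoint:
  "\<exists>!w\<in>half_strip (ln \<rho>) \<epsilon>. h (of_real a + exp w) - of_real Y = w"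
    and Ln_perturbation_fixpoint_near: "w \<in> half_strip (ln \<rho>) \<epsilon> \<Longrightarrow>
      h (of_real a + exp w) - of_real Y = w \<Longrightarrow> norm (exp w) < \<rho>"
proof -
  define T where "T w = h (of_real a + exp w) - of_real Y" for w
  let ?D = "half_strip (ln \<rho>) \<epsilon>"
  have region: "Im (of_real a + exp w) > 0" "norm ((of_real a + exp w) - of_real a) \<le> \<rho>"
    if "w \<in> ?D" for w
    using exp_half_strip[OF \<epsilon>(1) that] \<rho> by simp_all
  have Re_T: "Re (T w) \<le> ln (\<rho> / 2)" if "w \<in> ?D" for w
    using Re_h[OF region[OF that]] Y by (simp add: T_def)
  show "norm (exp w) < \<rho>" if "w \<in> ?D" "h (of_real a + exp w) - of_real Y = w" for w
  proof -
    have "exp (Re w) \<le> exp (ln (\<rho> / 2))" using Re_T[OF that(1)] that(2) by (simp add: T_def)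
    then show ?thesis using \<rho> by (simp add: norm_exp_eq_Re)
  qed
  have "T ` ?D \<subseteq> ?D"
  proof (intro image_subsetI)
    fix w assume w: "w \<in> ?D"
    have "ln (\<rho> / 2) \<le> ln \<rho>" using \<rho> by simp
    then show "T w \<in> ?D" using Re_T[OF w] Im_h[OF region[OF w]] by (simp add: half_strip_def T_def)
  qed
  then show "\<exists>!w\<in>?D. h (of_real a + exp w) - of_real Y = w" unfolding T_def[symmetric]
  proof (rule contraction_unique_fixpoint[OF closed_half_strip convex_half_strip half_strip_nonempty[OF \<epsilon>(2)]
        _ less_imp_le[OF \<epsilon>(1)] \<epsilon>(2)])
    show "(T has_field_derivative h' (of_real a + exp w) * exp w) (at w within ?D)" if "w \<in> ?D" for w
      unfolding T_def using deriv[OF region[OF that]]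
      by (auto intro!: derivative_eq_intros DERIV_chain2[where f = h] simp: has_field_derivative_at_within)
    show "norm (h' (of_real a + exp w) * exp w) \<le> \<epsilon>" if "w \<in> ?D" for w
      using region(2)[OF that] deriv_bound[OF region[OF that]]
      by (simp add: norm_mult) (meson mult_left_mono norm_ge_zero order_trans)
  qed
qed

lemma unique_solution_of_Ln_perturbation:
  "\<exists>!z. Im z > 0 \<and> norm (z - of_real a) < \<rho> \<and> h z - Ln (z - of_real a) = of_real Y"
proof -
  obtain w\<^sub>0 where w\<^sub>0: "w\<^sub>0 \<in> half_strip (ln \<rho>) \<epsilon>" "h (of_real a + exp w\<^sub>0) - of_real Y = w\<^sub>0"
    and unique: "\<And>w. w \<in> half_strip (ln \<rho>) \<epsilon> \<Longrightarrow> h (of_real a + exp w) - of_real Y = w \<Longrightarrow> w = w\<^sub>0"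
    using Ln_perturbation_fixpoint by blast
  show ?thesis
  proof (rule ex1I[of _ "of_real a + exp w\<^sub>0"])
    have "Ln (exp w\<^sub>0) = w\<^sub>0" using w\<^sub>0(1) \<epsilon> by (intro Ln_exp) (auto simp: half_strip_def)
    then show "Im (of_real a + exp w\<^sub>0) > 0 \<and> norm ((of_real a + exp w\<^sub>0) - of_real a) < \<rho>
        \<and> h (of_real a + exp w\<^sub>0) - Ln ((of_real a + exp w\<^sub>0) - of_real a) = of_real Y"
      using exp_half_strip(1)[OF \<epsilon>(1) w\<^sub>0(1)] Ln_perturbation_fixpoint_near[OF w\<^sub>0] w\<^sub>0(2)
      by (simp add: algebra_simps)
  next
    fix z assume z: "Im z > 0 \<and> norm (z - of_real a) < \<rho> \<and> h z - Ln (z - of_real a) = of_real Y"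
    define w where "w = Ln (z - of_real a)"
    have "Im (z - of_real a) \<noteq> 0" using z by simp
    then have nonzero: "z - of_real a \<noteq> 0" by auto
    then have exp_w: "exp w = z - of_real a" unfolding w_def by simp
    have "ln (norm (z - of_real a)) \<le> ln \<rho>" using z nonzero by (intro ln_mono) auto
    then have "Re w \<le> ln \<rho>" using nonzero by (simp add: w_def Re_Ln)
    moreover have "w = h z - of_real Y" using z by (simp add: w_def algebra_simps)
    ultimately have "w \<in> half_strip (ln \<rho>) \<epsilon>" using Im_h[of z] z by (simp add: half_strip_def)
    then have "w = w\<^sub>0" using unique \<open>w = h z - of_real Y\<close> exp_w by simp
    then show "z = of_real a + exp w\<^sub>0" using exp_w by simp
  qed
qed

end

lemma partial_log_sum_has_field_derivative:
  fixes c p :: "nat \<Rightarrow> real"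
  assumes "Im z \<noteq> 0"
  shows "((\<lambda>z. \<Sum>k\<in>K. of_real (c k) * Ln (z - of_real (p k))) has_field_derivative
           (\<Sum>k\<in>K. of_real (c k) / (z - of_real (p k)))) (at z)"
proof (rule DERIV_sum)
  fix k
  have "z - of_real (p k) \<notin> \<real>\<^sub>\<le>\<^sub>0" using assms by (auto simp: complex_nonpos_Reals_iff)
  then show "((\<lambda>z. of_real (c k) * Ln (z - of_real (p k))) has_field_derivative
      of_real (c k) / (z - of_real (p k))) (at z)"
    by (auto intro!: derivative_eq_intros simp: divide_inverse)
qed

lemma sum_abs_remove_le:
  fixes c :: "nat \<Rightarrow> real"
  shows "0 \<le> B \<Longrightarrow> (\<Sum>k\<in>{..N}-{j}. \<bar>c k\<bar> * B) \<le> (\<Sum>k\<le>N. \<bar>c k\<bar>) * B"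
  by (simp add: sum_distrib_right[symmetric] sum_mono2 mult_right_mono)

lemma Re_partial_log_sum_le_near_point:
  fixes c p :: "nat \<Rightarrow> real" and z :: complex
  assumes d: "d > 0" and gaps: "\<And>k. k < N \<Longrightarrow> p k + d \<le> p (Suc k)" and j: "j \<le> N"
    and P: "\<And>k. k \<le> N \<Longrightarrow> \<bar>p k\<bar> \<le> P" and z: "norm (z - of_real (p j)) \<le> min 1 (d / 2)"
  shows "Re (\<Sum>k\<in>{..N}-{j}. of_real (c k) * Ln (z - of_real (p k)))
           \<le> (\<Sum>k\<le>N. \<bar>c k\<bar>) * (1 + 2 * P + 2 / d)"
proof -
  have bounds: "d / 2 \<le> norm (z - of_real (p k)) \<and> norm (z - of_real (p k)) \<le> 1 + 2 * P"
    if k: "k \<in> {..N}-{j}" for k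
  proof
    show "d / 2 \<le> norm (z - of_real (p k))"
      using dist_other_point_ge_half_gap[of d N p k j z] d gaps j z k by auto
    have "norm (z - of_real (p k)) \<le> norm (z - of_real (p j)) + norm (of_real (p j - p k) :: complex)"
      using norm_triangle_ineq[of "z - of_real (p j)" "of_real (p j - p k)"] by (simp add: algebra_simps)
    moreover have "norm (of_real (p j - p k) :: complex) \<le> 2 * P"
      using P[OF j] P[of k] k by (simp only: norm_of_real) simp
    ultimately show "norm (z - of_real (p k)) \<le> 1 + 2 * P" using z by simp
  qed
  have "Re (\<Sum>k\<in>{..N}-{j}. of_real (c k) * Ln (z - of_real (p k)))
      = (\<Sum>k\<in>{..N}-{j}. c k * ln (norm (z - of_real (p k))))"
  proof (unfold Re_sum, intro sum.cong refl)
    fix k assume "k \<in> {..N}-{j}"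
    then have "z - of_real (p k) \<noteq> 0" using bounds[of k] d by auto
    then show "Re (of_real (c k) * Ln (z - of_real (p k))) = c k * ln (norm (z - of_real (p k)))"
      by (simp add: Re_Ln)
  qed
  also have "\<dots> \<le> (\<Sum>k\<in>{..N}-{j}. \<bar>c k\<bar> * (1 + 2 * P + 2 / d))"
  proof (rule sum_mono)
    fix k assume k: "k \<in> {..N}-{j}"
    have "\<bar>ln (norm (z - of_real (p k)))\<bar> \<le> 1 + 2 * P + 1 / (d / 2)"
      using bounds[OF k] d by (intro abs_ln_le_of_bounds) auto
    then have "\<bar>c k\<bar> * \<bar>ln (norm (z - of_real (p k)))\<bar> \<le> \<bar>c k\<bar> * (1 + 2 * P + 2 / d)"
      by (intro mult_left_mono) auto
    moreover have "c k * ln (norm (z - of_real (p k))) \<le> \<bar>c k\<bar> * \<bar>ln (norm (z - of_real (p k)))\<bar>"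
      by (simp flip: abs_mult)
    ultimately show "c k * ln (norm (z - of_real (p k))) \<le> \<bar>c k\<bar> * (1 + 2 * P + 2 / d)"
      by linarith
  qed
  also have "\<dots> \<le> (\<Sum>k\<le>N. \<bar>c k\<bar>) * (1 + 2 * P + 2 / d)"
    using P[OF j] d by (intro sum_abs_remove_le) auto
  finally show ?thesis .
qed

lemma norm_partial_log_sum_deriv_le_near_point:
  fixes c p :: "nat \<Rightarrow> real" and z :: complex
  assumes d: "d > 0" and gaps: "\<And>k. k < N \<Longrightarrow> p k + d \<le> p (Suc k)" and j: "j \<le> N"
    and z: "norm (z - of_real (p j)) \<le> d / 2"
  shows "norm (\<Sum>k\<in>{..N}-{j}. of_real (c k) / (z - of_real (p k))) \<le> (\<Sum>k\<le>N. \<bar>c k\<bar>) * (2 / d)"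
proof -
  have "norm (\<Sum>k\<in>{..N}-{j}. of_real (c k) / (z - of_real (p k))) \<le> (\<Sum>k\<in>{..N}-{j}. \<bar>c k\<bar> * (2 / d))"
  proof (rule order_trans[OF norm_sum sum_mono])
    fix k assume k: "k \<in> {..N}-{j}"
    have "d / 2 \<le> norm (z - of_real (p k))"
      using dist_other_point_ge_half_gap[of d N p k j z] d gaps j z k by auto
    then have "\<bar>c k\<bar> / norm (z - of_real (p k)) \<le> \<bar>c k\<bar> / (d / 2)"
      using d by (intro frac_le) auto
    then show "norm (of_real (c k) / (z - of_real (p k))) \<le> \<bar>c k\<bar> * (2 / d)"
      by (simp add: norm_divide)
  qed
  also have "\<dots> \<le> (\<Sum>k\<le>N. \<bar>c k\<bar>) * (2 / d)" using d by (intro sum_abs_remove_le) auto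
  finally show ?thesis .
qed

lemma log_sum_remove_point:
  assumes "j \<le> N" "c j = -1"
  shows "log_sum N c p z = (\<Sum>k\<in>{..N}-{j}. of_real (c k) * Ln (z - of_real (p k))) - Ln (z - of_real (p j))"
  using assms by (simp add: log_sum_def sum.remove[of "{..N}" j])

lemma Im_partial_log_sum_near_point:
  fixes c p :: "nat \<Rightarrow> real" and z :: complex
  assumes d: "d > 0" and gaps: "\<And>k. k < N \<Longrightarrow> p k + d \<le> p (Suc k)" and j: "j \<le> N" "c j = -1"
    and z: "Im z > 0" "norm (z - of_real (p j)) \<le> d / 2"
  shows "\<bar>Im (\<Sum>k\<in>{..N}-{j}. of_real (c k) * Ln (z - of_real (p k))) - pi * (\<Sum>k\<in>{j<..N}. c k)\<bar>
           \<le> (\<Sum>k\<le>N. \<bar>c k\<bar>) * (2 * Im z / d)"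
  using Im_log_sum_near_point[of d N p j z c] log_sum_remove_point[of j N c p z] d gaps j z by simp

lemma log_sum_unique_solution_near_point:
  fixes c p :: "nat \<Rightarrow> real"
  assumes d: "d > 0" and gaps: "\<And>k. k < N \<Longrightarrow> p k + d \<le> p (Suc k)" and j: "j \<le> N" "c j = -1"
    and tail: "0 < (\<Sum>k\<in>{j<..N}. c k)" "(\<Sum>k\<in>{j<..N}. c k) < 1"
  obtains \<rho> where "\<rho> > 0"
    "\<forall>\<^sub>F Y in at_top. \<exists>!z. Im z > 0 \<and> norm (z - of_real (p j)) < \<rho> \<and> log_sum N c p z = of_real Y"
proof -
  define A where "A = (\<Sum>k\<le>N. \<bar>c k\<bar>)"
  define P where "P = (\<Sum>k\<le>N. \<bar>p k\<bar>)"
  define s where "s = (\<Sum>k\<in>{j<..N}. c k)"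
  define \<epsilon> where "\<epsilon> = pi * min s (1 - s) / 2"
  define \<rho> where "\<rho> = min (min 1 (d / 2)) (\<epsilon> * d / (2 * A))"
  define h where "h z = (\<Sum>k\<in>{..N}-{j}. of_real (c k) * Ln (z - of_real (p k)))" for z
  have A: "1 \<le> A" using member_le_sum[of j "{..N}" "\<lambda>k. \<bar>c k\<bar>"] j by (simp add: A_def)
  have P: "\<bar>p k\<bar> \<le> P" if "k \<le> N" for k
    unfolding P_def using that by (intro member_le_sum) auto
  have \<epsilon>: "0 < \<epsilon>" "2 * \<epsilon> \<le> pi * s" "2 * \<epsilon> \<le> pi * (1 - s)"
    using tail by (auto simp: \<epsilon>_def s_def min_def)
  have "\<epsilon> \<le> pi / 4" unfolding \<epsilon>_def using pi_gt_zero by (simp add: min_def)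
  then have \<epsilon>1: "\<epsilon> < 1" using pi_less_4 by simp
  have \<rho>: "0 < \<rho>" "\<rho> \<le> min 1 (d / 2)" "A * (2 / d) * \<rho> \<le> \<epsilon>"
    using d A \<epsilon> by (auto simp: \<rho>_def field_simps min_def)
  have log_sum_eq: "log_sum N c p z = h z - Ln (z - of_real (p j))" for z
    unfolding h_def using j by (rule log_sum_remove_point)
  have unique: "\<exists>!z. Im z > 0 \<and> norm (z - of_real (p j)) < \<rho> \<and> h z - Ln (z - of_real (p j)) = of_real Y"
    if "A * (1 + 2 * P + 2 / d) - ln (\<rho> / 2) \<le> Y" for Y
  proof (rule unique_solution_of_Ln_perturbation[OF \<rho>(1) \<epsilon>(1) \<epsilon>1 _ _ _ _ that])
    fix z assume z: "Im z > 0" "norm (z - of_real (p j)) \<le> \<rho>"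
    then have near: "norm (z - of_real (p j)) \<le> min 1 (d / 2)" using \<rho>(2) by linarith
    show "(h has_field_derivative (\<Sum>k\<in>{..N}-{j}. of_real (c k) / (z - of_real (p k)))) (at z)"
      unfolding h_def using z(1) by (intro partial_log_sum_has_field_derivative) simp
    show "norm (\<Sum>k\<in>{..N}-{j}. of_real (c k) / (z - of_real (p k))) * \<rho> \<le> \<epsilon>"
    proof -
      have half: "norm (z - of_real (p j)) \<le> d / 2" using near by simp
      have "norm (\<Sum>k\<in>{..N}-{j}. of_real (c k) / (z - of_real (p k))) \<le> A * (2 / d)"
        unfolding A_def using norm_partial_log_sum_deriv_le_near_point[of d N p j z c] d gaps j(1) half
        by blast
      then show ?thesis using \<rho>(1,3) by (meson mult_right_mono less_imp_le order_trans)
    qed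
    show "Re (h z) \<le> A * (1 + 2 * P + 2 / d)"
      unfolding h_def A_def by (rule Re_partial_log_sum_le_near_point[OF d gaps j(1) P near])
    have "Im z \<le> \<rho>" using z abs_Im_le_cmod[of "z - of_real (p j)"] by simp
    then have "A * (2 / d) * Im z \<le> A * (2 / d) * \<rho>" using A d by (intro mult_left_mono) auto
    then have "A * (2 * Im z / d) \<le> \<epsilon>" using \<rho>(3) by simp
    moreover have "\<bar>Im (h z) - pi * s\<bar> \<le> A * (2 * Im z / d)"
      using Im_partial_log_sum_near_point[of d N p j c z] d gaps j z(1) near
      unfolding h_def A_def s_def by simp
    ultimately show "\<epsilon> \<le> Im (h z) \<and> Im (h z) \<le> pi - \<epsilon>" using \<epsilon> by (simp add: abs_le_iff algebra_simps)
  qed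
  show ?thesis
  proof (rule that[OF \<rho>(1)])
    show "\<forall>\<^sub>F Y in at_top. \<exists>!z. Im z > 0 \<and> norm (z - of_real (p j)) < \<rho> \<and> log_sum N c p z = of_real Y"
      using eventually_ge_at_top by (rule eventually_mono) (use unique in \<open>simp add: log_sum_eq\<close>)
  qed
qed

lemma finite_positive_lower_bound:
  fixes f :: "'a \<Rightarrow> real"
  assumes "finite B" "0 < a" "\<And>m. m \<in> B \<Longrightarrow> 0 < f m"
  obtains \<delta> where "0 < \<delta>" "\<delta> \<le> a" "\<And>m. m \<in> B \<Longrightarrow> \<delta> \<le> f m"
proof
  show "0 < Min (insert a (f ` B))" using assms by (subst Min_gr_iff) auto
  show "Min (insert a (f ` B)) \<le> a" using assms by (intro Min_le) auto
  show "Min (insert a (f ` B)) \<le> f m" if "m \<in> B" for m using assms that by (intro Min_le) auto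
qed

lemma log_sum_large_real_values_near_points:
  fixes c p :: "nat \<Rightarrow> real"
  assumes incr: "\<And>k. k < N \<Longrightarrow> p k < p (Suc k)" and sum0: "(\<Sum>k\<le>N. c k) = 0" and \<rho>: "\<rho> > 0"
  shows "\<forall>\<^sub>F Y in at_top. \<forall>z. Im z > 0 \<longrightarrow> log_sum N c p z = of_real Y \<longrightarrow>
           (\<exists>m\<le>N. c m < 0 \<and> 0 < (\<Sum>k\<in>{m<..N}. c k) \<and> (\<Sum>k\<in>{m<..N}. c k) < - c m
              \<and> norm (z - of_real (p m)) < \<rho>)"
proof -
  obtain d where d: "d > 0" and gaps: "\<And>k. k < N \<Longrightarrow> p k + d \<le> p (Suc k)"
    using uniform_gap[where p = p and N = N, OF incr] by blast
  define A where "A = (\<Sum>k\<le>N. \<bar>c k\<bar>)"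
  define B where "B = {m. m \<le> N \<and> c m < 0}"
  have A: "0 < A" if "m \<in> B" for m
    using that member_le_sum[of m "{..N}" "\<lambda>k. \<bar>c k\<bar>"] by (auto simp: A_def B_def)
  have pos: "0 < - c m * d / (2 * A)" if "m \<in> B" for m
    using that A[OF that] d by (intro divide_pos_pos mult_pos_pos) (auto simp: B_def)
  have "finite B" by (simp add: B_def)
  then obtain \<delta> where \<delta>0: "0 < \<delta>" "\<delta> \<le> min (d / 2) \<rho>"
    and \<delta>_le: "\<And>m. m \<in> B \<Longrightarrow> \<delta> \<le> - c m * d / (2 * A)"
    using finite_positive_lower_bound[of B "min (d / 2) \<rho>" "\<lambda>m. - c m * d / (2 * A)"] pos d \<rho> by auto
  have \<delta>: "0 < \<delta>" "\<delta> \<le> d / 2" "\<delta> \<le> \<rho>" using \<delta>0 by auto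
  have \<delta>_B: "\<delta> * (2 * A) \<le> - c m * d" if "m \<in> B" for m
    using \<delta>_le[OF that] A[OF that] by (simp add: field_simps)
  show ?thesis
    using log_sum_real_value_near_negative_point[OF sum0 \<delta>(1), of p]
  proof (rule eventually_mono, intro allI impI)
    fix Y z
    assume near: "\<forall>z. Im z \<noteq> 0 \<longrightarrow> log_sum N c p z = of_real Y \<longrightarrow>
                    (\<exists>k\<le>N. c k < 0 \<and> norm (z - of_real (p k)) < \<delta>)"
      and z: "Im z > 0" "log_sum N c p z = of_real Y"
    have "Im z \<noteq> 0" using z(1) by simp
    then obtain m where m: "m \<le> N" "c m < 0" "norm (z - of_real (p m)) < \<delta>"
      using near z(2) by blast
    have "\<not> ((\<Sum>k\<in>{m<..N}. c k) \<le> 0 \<or> - c m \<le> (\<Sum>k\<in>{m<..N}. c k))"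
    proof
      assume "(\<Sum>k\<in>{m<..N}. c k) \<le> 0 \<or> - c m \<le> (\<Sum>k\<in>{m<..N}. c k)"
      then have "Im (log_sum N c p z) \<noteq> 0"
        using \<delta>_B[of m] m
        by (intro Im_log_sum_nonzero_near_point[where p = p and N = N and c = c, OF d gaps m(1,2) _ z(1) m(3) \<delta>(2)]) (auto simp: A_def B_def)
      then show False using z(2) by simp
    qed
    then show "\<exists>m\<le>N. c m < 0 \<and> 0 < (\<Sum>k\<in>{m<..N}. c k) \<and> (\<Sum>k\<in>{m<..N}. c k) < - c m
              \<and> norm (z - of_real (p m)) < \<rho>"
      using m \<delta>(3) by (intro exI[of _ m]) auto
  qed
qed

theorem log_sum_omits_large_real_values:
  fixes c p :: "nat \<Rightarrow> real"
  assumes incr: "\<And>k. k < N \<Longrightarrow> p k < p (Suc k)" and sum0: "(\<Sum>k\<le>N. c k) = 0"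
    and tails: "\<And>m. m \<le> N \<Longrightarrow> c m < 0 \<Longrightarrow> (\<Sum>k\<in>{m<..N}. c k) \<le> 0 \<or> - c m \<le> (\<Sum>k\<in>{m<..N}. c k)"
  shows "\<forall>\<^sub>F Y in at_top. \<forall>z. Im z > 0 \<longrightarrow> log_sum N c p z \<noteq> of_real Y"
proof -
  have "\<forall>\<^sub>F Y in at_top. \<forall>z. Im z > 0 \<longrightarrow> log_sum N c p z = of_real Y \<longrightarrow>
           (\<exists>m\<le>N. c m < 0 \<and> 0 < (\<Sum>k\<in>{m<..N}. c k) \<and> (\<Sum>k\<in>{m<..N}. c k) < - c m
              \<and> norm (z - of_real (p m)) < 1)"
    by (rule log_sum_large_real_values_near_points) (use incr sum0 in auto)
  then show ?thesis
  proof (rule eventually_mono, intro allI impI notI)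
  fix Y z
  assume "\<forall>z. Im z > 0 \<longrightarrow> log_sum N c p z = of_real Y \<longrightarrow>
           (\<exists>m\<le>N. c m < 0 \<and> 0 < (\<Sum>k\<in>{m<..N}. c k) \<and> (\<Sum>k\<in>{m<..N}. c k) < - c m
              \<and> norm (z - of_real (p m)) < 1)"
    and "Im z > 0" "log_sum N c p z = of_real Y"
  then obtain m where "m \<le> N" "c m < 0" "0 < (\<Sum>k\<in>{m<..N}. c k)" "(\<Sum>k\<in>{m<..N}. c k) < - c m"
    by blast
  then show False using tails[of m] by linarith
  qed
qed

theorem log_sum_takes_large_real_values_once:
  fixes c p :: "nat \<Rightarrow> real"
  assumes incr: "\<And>k. k < N \<Longrightarrow> p k < p (Suc k)" and sum0: "(\<Sum>k\<le>N. c k) = 0"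
    and j: "j \<le> N" "c j = -1" and tail_j: "0 < (\<Sum>k\<in>{j<..N}. c k)" "(\<Sum>k\<in>{j<..N}. c k) < 1"
    and tails: "\<And>m. m \<le> N \<Longrightarrow> m \<noteq> j \<Longrightarrow> c m < 0 \<Longrightarrow>
                 (\<Sum>k\<in>{m<..N}. c k) \<le> 0 \<or> - c m \<le> (\<Sum>k\<in>{m<..N}. c k)"
  shows "\<forall>\<^sub>F Y in at_top. \<exists>!z. Im z > 0 \<and> log_sum N c p z = of_real Y"
proof -
  obtain d where d: "d > 0" and gaps: "\<And>k. k < N \<Longrightarrow> p k + d \<le> p (Suc k)"
    using uniform_gap[where p = p and N = N, OF incr] by blast
  obtain \<rho> where \<rho>: "\<rho> > 0" and local:
    "\<forall>\<^sub>F Y in at_top. \<exists>!z. Im z > 0 \<and> norm (z - of_real (p j)) < \<rho> \<and> log_sum N c p z = of_real Y"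
    using log_sum_unique_solution_near_point[where p = p and N = N and c = c, OF d gaps j tail_j] by blast
  have "\<forall>\<^sub>F Y in at_top. \<forall>z. Im z > 0 \<longrightarrow> log_sum N c p z = of_real Y \<longrightarrow>
           (\<exists>m\<le>N. c m < 0 \<and> 0 < (\<Sum>k\<in>{m<..N}. c k) \<and> (\<Sum>k\<in>{m<..N}. c k) < - c m
              \<and> norm (z - of_real (p m)) < \<rho>)"
    by (rule log_sum_large_real_values_near_points) (use incr sum0 \<rho> in auto)
  then have "\<forall>\<^sub>F Y in at_top. \<forall>z. Im z > 0 \<longrightarrow> log_sum N c p z = of_real Y \<longrightarrow> norm (z - of_real (p j)) < \<rho>"
  proof (rule eventually_mono, intro allI impI)
    fix Y z
    assume "\<forall>z. Im z > 0 \<longrightarrow> log_sum N c p z = of_real Y \<longrightarrow>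
             (\<exists>m\<le>N. c m < 0 \<and> 0 < (\<Sum>k\<in>{m<..N}. c k) \<and> (\<Sum>k\<in>{m<..N}. c k) < - c m
                \<and> norm (z - of_real (p m)) < \<rho>)"
      and "Im z > 0" "log_sum N c p z = of_real Y"
    then obtain m where "m \<le> N" "c m < 0" "0 < (\<Sum>k\<in>{m<..N}. c k)" "(\<Sum>k\<in>{m<..N}. c k) < - c m"
        "norm (z - of_real (p m)) < \<rho>"
      by blast
    moreover from this have "m = j" using tails[of m] by fastforce
    ultimately show "norm (z - of_real (p j)) < \<rho>" by simp
  qed
  with local show ?thesis
    by (rule eventually_elim2) (metis (no_types, lifting))
qed

section \<open>Logarithms and their integrals\<close>

definition left_log :: "real \<Rightarrow> complex \<Rightarrow> complex" where
  "left_log M z = Ln (1 - exp (complex_of_real M) / z)"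

definition right_log :: "real \<Rightarrow> complex \<Rightarrow> complex" where
  "right_log M z = Ln (1 - exp (- complex_of_real M) * z)"

lemma left_log_argument_notin_nonpos_Reals:
  assumes "Im z \<noteq> 0" shows "1 - exp (complex_of_real M) / z \<notin> \<real>\<^sub>\<le>\<^sub>0"
proof -
  have "Im (1 - exp (complex_of_real M) / z) = exp M * Im z / (norm z)\<^sup>2"
    by (simp add: exp_of_real Im_divide cmod_power2)
  moreover have "z \<noteq> 0" using assms by auto
  ultimately show ?thesis using assms by (auto simp: complex_nonpos_Reals_iff)
qed

lemma right_log_argument_notin_nonpos_Reals:
  assumes "Im z \<noteq> 0" shows "1 - exp (- complex_of_real M) * z \<notin> \<real>\<^sub>\<le>\<^sub>0"
proof -
  have "exp (- complex_of_real M) = of_real (exp (- M))" by (simp add: exp_of_real[symmetric])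
  then have "Im (1 - exp (- complex_of_real M) * z) = - exp (- M) * Im z" by simp
  then show ?thesis using assms by (auto simp: complex_nonpos_Reals_iff)
qed

lemma parametric_integral_has_field_derivative:
  fixes f f' :: "complex \<Rightarrow> real \<Rightarrow> complex" and F :: "real \<Rightarrow> complex"
  assumes U: "open U" "convex U" "z\<^sub>0 \<in> U" and ab: "a \<le> b"
    and f: "\<And>z M. z \<in> U \<Longrightarrow> ((\<lambda>z. f z M) has_field_derivative f' z M) (at z)"
    and cont_f: "\<And>z. z \<in> U \<Longrightarrow> continuous_on {a..b} (f z)"
    and cont_f': "continuous_on (U \<times> {a..b}) (\<lambda>(z, M). f' z M)"
    and F: "\<And>M. M \<in> {a..b} \<Longrightarrow> (F has_vector_derivative f' z\<^sub>0 M) (at M within {a..b})"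
  shows "((\<lambda>z. integral {a..b} (f z)) has_field_derivative F b - F a) (at z\<^sub>0)"
proof -
  have "((\<lambda>z. integral (cbox a b) (f z)) has_field_derivative integral (cbox a b) (f' z\<^sub>0)) (at z\<^sub>0 within U)"
  proof (rule leibniz_rule_field_derivative[OF _ _ _ U(3,2)])
    show "((\<lambda>z. f z M) has_field_derivative f' z M) (at z within U)" if "z \<in> U" for z M
      using f[OF that] by (rule has_field_derivative_at_within)
    show "f z integrable_on cbox a b" if "z \<in> U" for z
      using cont_f[OF that] by (simp add: integrable_continuous_interval)
  qed (use cont_f' in simp)
  moreover have "integral {a..b} (f' z\<^sub>0) = F b - F a"
    using fundamental_theorem_of_calculus[OF ab F] by (rule integral_unique)
  ultimately show ?thesis using at_within_open[OF U(3,1)] by simp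
qed

lemma left_log_integral_has_field_derivative:
  assumes ab: "a \<le> b" and z\<^sub>0: "Im z\<^sub>0 \<noteq> 0"
  shows "((\<lambda>z. integral {a..b} (\<lambda>M. left_log M z)) has_field_derivative
           - (left_log b z\<^sub>0 - left_log a z\<^sub>0) / z\<^sub>0) (at z\<^sub>0)"
proof -
  define U where "U = ball z\<^sub>0 \<bar>Im z\<^sub>0\<bar>"
  have U: "open U" "convex U" "z\<^sub>0 \<in> U" using z\<^sub>0 by (auto simp: U_def)
  have nonreal: "Im z \<noteq> 0" if "z \<in> U" for z
    using that abs_Im_le_cmod[of "z\<^sub>0 - z"] by (auto simp: U_def dist_norm)
  have not_exp: "z \<noteq> exp (complex_of_real M)" if "Im z \<noteq> 0" for z M
    using that by (auto simp: exp_of_real)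
  define f' where "f' z M = exp (complex_of_real M) / (z * (z - exp (complex_of_real M)))" for z M
  have "((\<lambda>z. integral {a..b} (\<lambda>M. left_log M z)) has_field_derivative
      (- left_log b z\<^sub>0 / z\<^sub>0) - (- left_log a z\<^sub>0 / z\<^sub>0)) (at z\<^sub>0)"
  proof (rule parametric_integral_has_field_derivative[OF U ab, where f' = f'])
    show "((\<lambda>z. left_log M z) has_field_derivative f' z M) (at z)" if "z \<in> U" for z M
      using left_log_argument_notin_nonpos_Reals[OF nonreal[OF that]] nonreal[OF that] not_exp[OF nonreal[OF that]]
      by (auto intro!: derivative_eq_intros simp: left_log_def f'_def power2_eq_square field_simps)
    show "continuous_on {a..b} (\<lambda>M. left_log M z)" if "z \<in> U" for z
      using left_log_argument_notin_nonpos_Reals[OF nonreal[OF that]] nonreal[OF that]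
      unfolding left_log_def by (intro continuous_intros) auto
    have "z \<noteq> 0" "z - exp (complex_of_real M) \<noteq> 0" if "z \<in> U" for z M
      using nonreal[OF that] not_exp[OF nonreal[OF that]] by auto
    then show "continuous_on (U \<times> {a..b}) (\<lambda>(z, M). f' z M)"
      unfolding f'_def split_beta by (intro continuous_intros) auto
    show "((\<lambda>M. - left_log M z\<^sub>0 / z\<^sub>0) has_vector_derivative f' z\<^sub>0 M) (at M within {a..b})" for M
    proof -
      have "((\<lambda>w. - Ln (1 - exp w / z\<^sub>0) / z\<^sub>0) has_field_derivative f' z\<^sub>0 M) (at (complex_of_real M))"
        using left_log_argument_notin_nonpos_Reals[OF z\<^sub>0, of M] z\<^sub>0 not_exp[OF z\<^sub>0, of M]
        by (auto intro!: derivative_eq_intros simp: f'_def power2_eq_square field_simps)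
      then show ?thesis unfolding left_log_def by (rule has_vector_derivative_real_field)
    qed
  qed
  then show ?thesis by (simp add: diff_divide_distrib)
qed

lemma right_log_integral_has_field_derivative:
  assumes ab: "a \<le> b" and z\<^sub>0: "Im z\<^sub>0 \<noteq> 0"
  shows "((\<lambda>z. integral {a..b} (\<lambda>M. right_log M z)) has_field_derivative
           - (right_log b z\<^sub>0 - right_log a z\<^sub>0) / z\<^sub>0) (at z\<^sub>0)"
proof -
  define U where "U = ball z\<^sub>0 \<bar>Im z\<^sub>0\<bar>"
  have U: "open U" "convex U" "z\<^sub>0 \<in> U" using z\<^sub>0 by (auto simp: U_def)
  have nonreal: "Im z \<noteq> 0" if "z \<in> U" for z
    using that abs_Im_le_cmod[of "z\<^sub>0 - z"] by (auto simp: U_def dist_norm)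
  define f' where "f' z M = - exp (- complex_of_real M) / (1 - exp (- complex_of_real M) * z)" for z M
  have "((\<lambda>z. integral {a..b} (\<lambda>M. right_log M z)) has_field_derivative
      (- right_log b z\<^sub>0 / z\<^sub>0) - (- right_log a z\<^sub>0 / z\<^sub>0)) (at z\<^sub>0)"
  proof (rule parametric_integral_has_field_derivative[OF U ab, where f' = f'])
    show "((\<lambda>z. right_log M z) has_field_derivative f' z M) (at z)" if "z \<in> U" for z M
      using right_log_argument_notin_nonpos_Reals[OF nonreal[OF that]]
      by (auto intro!: derivative_eq_intros simp: right_log_def f'_def field_simps)
    show "continuous_on {a..b} (\<lambda>M. right_log M z)" if "z \<in> U" for z
      using right_log_argument_notin_nonpos_Reals[OF nonreal[OF that]]
      unfolding right_log_def by (intro continuous_intros) auto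
    have "1 - exp (- complex_of_real M) * z \<noteq> 0" if "z \<in> U" for z M
      using right_log_argument_notin_nonpos_Reals[OF nonreal[OF that], of M] by auto
    then show "continuous_on (U \<times> {a..b}) (\<lambda>(z, M). f' z M)"
      unfolding f'_def split_beta by (intro continuous_intros) auto
    show "((\<lambda>M. - right_log M z\<^sub>0 / z\<^sub>0) has_vector_derivative f' z\<^sub>0 M) (at M within {a..b})" for M
    proof -
      have "((\<lambda>w. - Ln (1 - exp (- w) * z\<^sub>0) / z\<^sub>0) has_field_derivative f' z\<^sub>0 M) (at (complex_of_real M))"
      proof -
        have "1 - exp (- complex_of_real M) * z\<^sub>0 \<noteq> 0" "z\<^sub>0 \<noteq> 0"
          using right_log_argument_notin_nonpos_Reals[OF z\<^sub>0, of M] z\<^sub>0 by auto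
        then show ?thesis
          using right_log_argument_notin_nonpos_Reals[OF z\<^sub>0, of M]
          by (auto intro!: derivative_eq_intros simp: f'_def field_simps)
      qed
      then show ?thesis unfolding right_log_def by (rule has_vector_derivative_real_field)
    qed
  qed
  then show ?thesis by (simp add: diff_divide_distrib)
qed

lemma left_log_upper_half_plane:
  assumes z: "Im z > 0" shows "left_log M z = Ln (z - of_real (exp M)) - Ln z"
proof -
  have u: "Im (z - of_real (exp M)) > 0" using z by simp
  then have u0: "z - of_real (exp M) \<noteq> 0" by auto
  have z0: "z \<noteq> 0" "z \<notin> \<real>\<^sub>\<le>\<^sub>0" using z by (auto simp: complex_nonpos_Reals_iff)
  have "1 - exp (complex_of_real M) / z = (z - of_real (exp M)) * inverse z"
    using z0 by (simp add: exp_of_real field_simps)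
  also have "Ln \<dots> = Ln (z - of_real (exp M)) + Ln (inverse z)"
    using Im_Ln_pos_lt_imp[OF u] Im_Ln_pos_lt_imp[OF z] z0 u0
    by (intro Ln_times_simple) (auto simp: Ln_inverse)
  finally show ?thesis using Ln_inverse[OF z0(2)] by (simp add: left_log_def)
qed

lemma right_log_upper_half_plane:
  assumes z: "Im z > 0" shows "right_log M z = Ln (z - of_real (exp M)) - of_real M - \<i> * pi"
proof -
  have u: "Im (z - of_real (exp M)) > 0" using z by simp
  then have u0: "z - of_real (exp M) \<noteq> 0" by auto
  have "exp (- complex_of_real M) = of_real (exp (- M))" by (simp add: exp_of_real[symmetric])
  then have "1 - exp (- complex_of_real M) * z = of_real (exp (- M)) * - (z - of_real (exp M))"
    by (simp add: algebra_simps exp_minus flip: of_real_mult)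
  also have "Ln \<dots> = - of_real M + Ln (- (z - of_real (exp M)))"
    using u0 by (subst Ln_times_of_real) (auto simp: Ln_of_real)
  also have "Ln (- (z - of_real (exp M))) = Ln (z - of_real (exp M)) - \<i> * pi"
    using Ln_minus[OF u0] u by simp
  finally show ?thesis by (simp add: right_log_def)
qed

lemma left_log_cnj: "Im z \<noteq> 0 \<Longrightarrow> left_log M (cnj z) = cnj (left_log M z)"
  using cnj_Ln[OF left_log_argument_notin_nonpos_Reals] by (simp add: left_log_def exp_of_real)

lemma right_log_cnj:
  assumes "Im z \<noteq> 0" shows "right_log M (cnj z) = cnj (right_log M z)"
proof -
  have "exp (- complex_of_real M) = of_real (exp (- M))" by (simp add: exp_of_real[symmetric])
  then have "cnj (1 - exp (- complex_of_real M) * z) = 1 - exp (- complex_of_real M) * cnj z" by simp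
  then show ?thesis
    using cnj_Ln[OF right_log_argument_notin_nonpos_Reals[OF assms, of M]]
    by (simp only: right_log_def)
qed

lemma has_integral_consecutive_intervals:
  fixes q :: "nat \<Rightarrow> real" and f :: "real \<Rightarrow> complex"
  assumes "m \<le> N" and mono: "\<And>k. m \<le> k \<Longrightarrow> k < N \<Longrightarrow> q k \<le> q (Suc k)"
    and pieces: "\<And>k. m < k \<Longrightarrow> k \<le> N \<Longrightarrow> (f has_integral I k) {q (k - 1)..q k}"
  shows "(f has_integral (\<Sum>k\<in>{Suc m..N}. I k)) {q m..q N}"
  using assms(1)
proof (induction N rule: dec_induct)
  case (step N)
  have "q m \<le> q N"
    using step.hyps mono by (induction N rule: dec_induct) (auto intro: order_trans)
  then have "(f has_integral (\<Sum>k\<in>{Suc m..N}. I k) + I (Suc N)) {q m..q (Suc N)}"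
    using step mono pieces[of "Suc N"] by (intro has_integral_combine[OF _ _ step.IH]) auto
  then show ?case using step.hyps by simp
qed (simp add: has_integral_refl)

lemma sum_by_parts:
  fixes w f :: "nat \<Rightarrow> 'a::comm_ring"
  shows "(\<Sum>k\<in>{1..N}. w k * (f k - f (k - 1)))
       = (\<Sum>k<N. (w k - w (Suc k)) * f k) + w N * f N - w 0 * f 0"
  by (induction N) (simp_all add: algebra_simps)

lemma conj_symmetric_set_of_upper_solutions:
  fixes P :: "complex \<Rightarrow> bool"
  assumes S: "S = {z. (Im z > 0 \<and> P z) \<or> (Im z < 0 \<and> P (cnj z))}"
  shows "(\<And>z. Im z > 0 \<Longrightarrow> \<not> P z) \<Longrightarrow> S = {}"
    and "\<exists>!z. Im z > 0 \<and> P z \<Longrightarrow> \<exists>w. Im w \<noteq> 0 \<and> S = {w, cnj w}"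
proof -
  show "S = {}" if "\<And>z. Im z > 0 \<Longrightarrow> \<not> P z"
    using that[of _] that[of "cnj _"] by (auto simp: S)
  assume "\<exists>!z. Im z > 0 \<and> P z"
  then obtain w where w: "Im w > 0" "P w" and unique: "\<And>z. Im z > 0 \<Longrightarrow> P z \<Longrightarrow> z = w" by blast
  have "S = {w, cnj w}"
    using w unique[of "cnj _"] by (auto simp: S dest: unique)
  then show "\<exists>w. Im w \<noteq> 0 \<and> S = {w, cnj w}" using w(1) by (intro exI[of _ w]) simp
qed

lemma eventually_at_top_diff_const:
  fixes c :: real
  assumes "\<forall>\<^sub>F y in at_top. P y" shows "\<forall>\<^sub>F x in at_top. P (x - c)"
proof -
  have "filterlim (\<lambda>x. - c + x) at_top at_top"
    by (rule filterlim_tendsto_add_at_top[OF tendsto_const filterlim_ident])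
  then show ?thesis using assms by (simp add: filterlim_iff)
qed

section \<open>Critical points of the action\<close>

locale cut_setting =
  fixes n j :: nat and Vs beta :: "nat \<Rightarrow> real" and V :: "real \<Rightarrow> real" and tau :: real
  assumes pl: "pl_setting n Vs beta V" and j: "1 \<le> j" "j \<le> n"
    and tau: "Vs (j - 1) < tau" "tau < Vs j"
begin

text \<open>Inserting \<open>tau\<close> as an extra breakpoint cuts \<open>[Vs 0, Vs n]\<close> into the \<open>n + 1\<close> intervals
  \<open>[node (k - 1), node k]\<close>, on each of which \<open>V'\<close> is constant, equal to \<open>slope k\<close>;
  the first \<open>j\<close> of them lie to the left of \<open>tau\<close>.\<close>

definition node :: "nat \<Rightarrow> real" where
  "node k = (if k < j then Vs k else if k = j then tau else Vs (k - 1))"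

definition slope :: "nat \<Rightarrow> real" where
  "slope k = (if k \<le> j then beta k else beta (k - 1))"

text \<open>The coefficient with which the \<open>k\<close>-th interval enters \<open>z S'(z)\<close>, extended by \<open>0\<close> at both ends.\<close>

definition weight :: "nat \<Rightarrow> real" where
  "weight k = (if k = 0 then 0 else if k \<le> j then - (1 + slope k) / 2
               else if k \<le> Suc n then (1 - slope k) / 2 else 0)"

definition Lambda :: "complex \<Rightarrow> complex" where
  "Lambda z = (\<Sum>k\<in>{1..j}. of_real (weight k) * (left_log (node k) z - left_log (node (k - 1)) z))
     + (\<Sum>k\<in>{Suc j..Suc n}. of_real (weight k) * (right_log (node k) z - right_log (node (k - 1)) z))"

lemma Vs_strict_mono: "k < n \<Longrightarrow> Vs k < Vs (Suc k)"
  using pl by (simp add: pl_setting_def)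

lemma node_strict_mono:
  assumes "k < Suc n" shows "node k < node (Suc k)"
proof -
  consider "Suc k < j" | "Suc k = j" | "k = j" | "j < k" by linarith
  then show ?thesis
  proof cases
    case 1 then show ?thesis using Vs_strict_mono[of k] j by (simp add: node_def)
  next
    case 2
    then have "k = j - 1" by simp
    with 2 show ?thesis using tau(1) by (simp add: node_def)
  next
    case 3 then show ?thesis using tau(2) by (simp add: node_def)
  next
    case 4 then show ?thesis using Vs_strict_mono[of "k - 1"] assms by (simp add: node_def)
  qed
qed

lemma node_mono: "a \<le> c \<Longrightarrow> c \<le> Suc n \<Longrightarrow> node a \<le> node c"
proof (induction c rule: dec_induct)
  case (step c)
  then show ?case using node_strict_mono[of c] by linarith
qed simp

lemma node_0: "node 0 = Vs 0" and node_j: "node j = tau" and node_Suc_n: "node (Suc n) = Vs n"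
  using j by (simp_all add: node_def)

lemma deriv_V_on_interval:
  assumes k: "1 \<le> k" "k \<le> Suc n" and M: "node (k - 1) < M" "M < node k"
  shows "deriv V M = slope k"
proof -
  define i where "i = (if k \<le> j then k else k - 1)"
  have i: "i \<in> {1..n}" using k j by (auto simp: i_def)
  consider "k < j" | "k = j" | "k = Suc j" | "Suc j < k" by linarith
  then have "Vs (i - 1) \<le> node (k - 1) \<and> node k \<le> Vs i"
  proof cases
    case 1
    then have "i = k" "node (k - 1) = Vs (k - 1)" "node k = Vs k" by (simp_all add: i_def node_def)
    then show ?thesis by simp
  next
    case 2
    then have "i = j" "node (k - 1) = Vs (j - 1)" "node k = tau" using j by (simp_all add: i_def node_def)
    then show ?thesis using tau by simp
  next
    case 3
    then have "i = j" "node (k - 1) = tau" "node k = Vs j" by (simp_all add: i_def node_def)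
    then show ?thesis using tau by simp
  next
    case 4
    then have "\<not> k - 1 < j" "k - 1 \<noteq> j" by auto
    with 4 have "i = k - 1" "node (k - 1) = Vs (k - 1 - 1)" "node k = Vs (k - 1)"
      by (simp_all add: i_def node_def)
    then show ?thesis by simp
  qed
  then have M_in: "M \<in> {Vs (i - 1)<..<Vs i}" using M by auto
  have "(V has_field_derivative beta i) (at M)"
  proof (rule has_field_derivative_transform_within_open[OF _ open_greaterThanLessThan M_in])
    show "((\<lambda>x. V (Vs (i - 1)) + beta i * (x - Vs (i - 1))) has_field_derivative beta i) (at M)"
      by (auto intro!: derivative_eq_intros)
    have "\<forall>i\<in>{1..n}. \<forall>M\<in>{Vs (i - 1)..Vs i}. V M = V (Vs (i - 1)) + beta i * (M - Vs (i - 1))"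
      using pl unfolding pl_setting_def by blast
    then show "V (Vs (i - 1)) + beta i * (x - Vs (i - 1)) = V x" if "x \<in> {Vs (i - 1)<..<Vs i}" for x
      using i that by (metis greaterThanLessThan_iff atLeastAtMost_iff less_imp_le)
  qed
  then show ?thesis by (simp add: DERIV_imp_deriv slope_def i_def)
qed

definition left_integral :: "nat \<Rightarrow> complex \<Rightarrow> complex" where
  "left_integral k z = integral {node (k - 1)..node k} (\<lambda>M. left_log M z)"

definition right_integral :: "nat \<Rightarrow> complex \<Rightarrow> complex" where
  "right_integral k z = integral {node (k - 1)..node k} (\<lambda>M. right_log M z)"

lemma left_part_has_integral:
  assumes z: "Im z \<noteq> 0"
  shows "((\<lambda>M. of_real ((1 + deriv V M) / 2) * left_log M z) has_integral
           - (\<Sum>k\<in>{1..j}. of_real (weight k) * left_integral k z)) {node 0..node j}"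
proof -
  have "((\<lambda>M. of_real ((1 + deriv V M) / 2) * left_log M z) has_integral
      (\<Sum>k\<in>{Suc 0..j}. - of_real (weight k) * left_integral k z)) {node 0..node j}"
  proof (rule has_integral_consecutive_intervals)
    fix k assume k: "0 < k" "k \<le> j"
    have "((\<lambda>M. left_log M z) has_integral left_integral k z) {node (k - 1)..node k}"
      unfolding left_integral_def left_log_def using left_log_argument_notin_nonpos_Reals[OF z] z
      by (intro integrable_integral integrable_continuous_interval continuous_intros) auto
    then have int: "((\<lambda>M. - of_real (weight k) * left_log M z) has_integral
        - of_real (weight k) * left_integral k z) {node (k - 1)..node k}"
      by (rule has_integral_mult_right)
    show "((\<lambda>M. of_real ((1 + deriv V M) / 2) * left_log M z) has_integral
        - of_real (weight k) * left_integral k z) {node (k - 1)..node k}"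
    proof (rule has_integral_spike_finite[OF _ _ int])
      fix M assume "M \<in> {node (k - 1)..node k} - {node (k - 1), node k}"
      then have "deriv V M = slope k" using k j by (intro deriv_V_on_interval) auto
      then show "of_real ((1 + deriv V M) / 2) * left_log M z = - of_real (weight k) * left_log M z"
        using k by (simp add: weight_def field_simps)
    qed simp
  qed (use j node_strict_mono in \<open>auto intro: less_imp_le\<close>)
  then show ?thesis by (simp add: sum_negf)
qed

lemma right_part_has_integral:
  assumes z: "Im z \<noteq> 0"
  shows "((\<lambda>M. of_real ((1 - deriv V M) / 2) * right_log M z) has_integral
           (\<Sum>k\<in>{Suc j..Suc n}. of_real (weight k) * right_integral k z)) {node j..node (Suc n)}"
proof (rule has_integral_consecutive_intervals)
  fix k assume k: "j < k" "k \<le> Suc n"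
  have "((\<lambda>M. right_log M z) has_integral right_integral k z) {node (k - 1)..node k}"
    unfolding right_integral_def right_log_def using right_log_argument_notin_nonpos_Reals[OF z]
    by (intro integrable_integral integrable_continuous_interval continuous_intros) auto
  then have int: "((\<lambda>M. of_real (weight k) * right_log M z) has_integral
      of_real (weight k) * right_integral k z) {node (k - 1)..node k}"
    by (rule has_integral_mult_right)
  show "((\<lambda>M. of_real ((1 - deriv V M) / 2) * right_log M z) has_integral
      of_real (weight k) * right_integral k z) {node (k - 1)..node k}"
  proof (rule has_integral_spike_finite[OF _ _ int])
    fix M assume "M \<in> {node (k - 1)..node k} - {node (k - 1), node k}"
    then have "deriv V M = slope k" using k j by (intro deriv_V_on_interval) auto
    then show "of_real ((1 - deriv V M) / 2) * right_log M z = of_real (weight k) * right_log M z"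
      using k by (simp add: weight_def)
  qed simp
qed (use j node_strict_mono in \<open>auto intro: less_imp_le\<close>)

lemma S_fun_eq_sum_of_integrals:
  assumes z: "Im z \<noteq> 0"
  shows "S_fun n Vs V tau chi z = - (\<Sum>k\<in>{1..j}. of_real (weight k) * left_integral k z)
      - (\<Sum>k\<in>{Suc j..Suc n}. of_real (weight k) * right_integral k z) - of_real (chi - V tau / 2) * Ln z"
  using integral_unique[OF left_part_has_integral[OF z]] integral_unique[OF right_part_has_integral[OF z]]
    node_0 node_j node_Suc_n
  by (simp add: S_fun_def left_log_def right_log_def)

lemma S_fun_has_field_derivative:
  assumes z\<^sub>0: "Im z\<^sub>0 \<noteq> 0"
  shows "(S_fun n Vs V tau chi has_field_derivative (Lambda z\<^sub>0 - of_real (chi - V tau / 2)) / z\<^sub>0) (at z\<^sub>0)"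
proof -
  define X where "X = complex_of_real (chi - V tau / 2)"
  define F where "F z = - (\<Sum>k\<in>{1..j}. of_real (weight k) * left_integral k z)
      - (\<Sum>k\<in>{Suc j..Suc n}. of_real (weight k) * right_integral k z) - X * Ln z" for z
  have mono: "node (k - 1) \<le> node k" if "k \<le> Suc n" for k
    using that by (intro node_mono) auto
  have deriv: "(F has_field_derivative
      - (\<Sum>k\<in>{1..j}. of_real (weight k) * (- (left_log (node k) z\<^sub>0 - left_log (node (k - 1)) z\<^sub>0) / z\<^sub>0))
      - (\<Sum>k\<in>{Suc j..Suc n}. of_real (weight k) * (- (right_log (node k) z\<^sub>0 - right_log (node (k - 1)) z\<^sub>0) / z\<^sub>0))
      - X * inverse z\<^sub>0) (at z\<^sub>0)"
    unfolding F_def left_integral_def right_integral_def using j z\<^sub>0 mono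
    by (intro DERIV_diff DERIV_minus DERIV_sum DERIV_cmult left_log_integral_has_field_derivative
        right_log_integral_has_field_derivative has_field_derivative_Ln)
      (auto simp: complex_nonpos_Reals_iff)
  have "- (\<Sum>k\<in>{1..j}. of_real (weight k) * (- (left_log (node k) z\<^sub>0 - left_log (node (k - 1)) z\<^sub>0) / z\<^sub>0))
      - (\<Sum>k\<in>{Suc j..Suc n}. of_real (weight k) * (- (right_log (node k) z\<^sub>0 - right_log (node (k - 1)) z\<^sub>0) / z\<^sub>0))
      - X * inverse z\<^sub>0 = (Lambda z\<^sub>0 - X) / z\<^sub>0"
    by (simp add: Lambda_def divide_inverse sum_distrib_left sum_distrib_right sum_subtractf
        sum_negf algebra_simps)
  from DERIV_cong[OF deriv this] show ?thesis unfolding X_def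
  proof (rule has_field_derivative_transform_within_open)
    show "open {z. Im z \<noteq> 0}" by (intro open_Collect_neq continuous_intros)
    show "F z = S_fun n Vs V tau chi z" if "z \<in> {z. Im z \<noteq> 0}" for z
      using S_fun_eq_sum_of_integrals[of z chi] that by (simp add: F_def X_def)
  qed (use z\<^sub>0 in simp)
qed

lemma nonreal_crit_points_eq:
  "nonreal_crit_points n Vs V tau chi = {z. Im z \<noteq> 0 \<and> Lambda z = of_real (chi - V tau / 2)}"
proof -
  have "(S_fun n Vs V tau chi has_field_derivative 0) (at z) \<longleftrightarrow> Lambda z = of_real (chi - V tau / 2)"
    if "Im z \<noteq> 0" for z
  proof
    assume "(S_fun n Vs V tau chi has_field_derivative 0) (at z)"
    then have "(Lambda z - of_real (chi - V tau / 2)) / z = 0"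
      by (rule DERIV_unique[OF S_fun_has_field_derivative[OF that]])
    then show "Lambda z = of_real (chi - V tau / 2)" using that by auto
  next
    assume "Lambda z = of_real (chi - V tau / 2)"
    then show "(S_fun n Vs V tau chi has_field_derivative 0) (at z)"
      using S_fun_has_field_derivative[OF that, of chi] by simp
  qed
  then show ?thesis by (auto simp: nonreal_crit_points_def)
qed

lemma Lambda_cnj: "Im z \<noteq> 0 \<Longrightarrow> Lambda (cnj z) = cnj (Lambda z)"
  by (simp add: Lambda_def left_log_cnj right_log_cnj cnj_sum)


definition coeff :: "nat \<Rightarrow> real" where
  "coeff k = weight k - weight (Suc k)"

definition Lambda_offset :: real where
  "Lambda_offset = - (\<Sum>k\<in>{Suc j..Suc n}. weight k * (node k - node (k - 1)))"

lemma weight_0: "weight 0 = 0" and weight_beyond: "weight (Suc (Suc n)) = 0"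
  using j by (simp_all add: weight_def)

abbreviation node_log_sum :: "complex \<Rightarrow> complex" where
  "node_log_sum \<equiv> log_sum (Suc n) coeff (\<lambda>k. exp (node k))"

text \<open>On the upper half-plane the terms \<open>Ln z\<close> and \<open>\<i> pi\<close> cancel in the differences of
  \<open>left_log\<close> and \<open>right_log\<close>, and summation by parts does the rest.\<close>

lemma Lambda_upper_half_plane:
  assumes z: "Im z > 0"
  shows "Lambda z = node_log_sum z + of_real Lambda_offset"
proof -
  define L where "L k = Ln (z - of_real (exp (node k)))" for k
  have left: "left_log (node k) z - left_log (node (k - 1)) z = L k - L (k - 1)" for k
    by (simp add: left_log_upper_half_plane[OF z] L_def)
  have right: "of_real (weight k) * (right_log (node k) z - right_log (node (k - 1)) z)
      = of_real (weight k) * (L k - L (k - 1)) - of_real (weight k * (node k - node (k - 1)))" for k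
    by (simp add: right_log_upper_half_plane[OF z] L_def algebra_simps)
  have "Lambda z = (\<Sum>k\<in>{1..j}. of_real (weight k) * (L k - L (k - 1)))
      + (\<Sum>k\<in>{Suc j..Suc n}. of_real (weight k) * (L k - L (k - 1)))
      - (\<Sum>k\<in>{Suc j..Suc n}. of_real (weight k * (node k - node (k - 1))))"
    unfolding Lambda_def left right sum_subtractf by simp
  also have "(\<Sum>k\<in>{1..j}. of_real (weight k) * (L k - L (k - 1)))
      + (\<Sum>k\<in>{Suc j..Suc n}. of_real (weight k) * (L k - L (k - 1)))
      = (\<Sum>k\<in>{1..Suc n}. of_real (weight k) * (L k - L (k - 1)))"
  proof -
    have "{1..Suc n} = {1..j} \<union> {Suc j..Suc n}" using j by auto
    then show ?thesis by (simp add: sum.union_disjoint)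
  qed
  also have "- (\<Sum>k\<in>{Suc j..Suc n}. complex_of_real (weight k * (node k - node (k - 1))))
      = of_real Lambda_offset"
    by (simp add: Lambda_offset_def)
  then have "\<And>A. A - (\<Sum>k\<in>{Suc j..Suc n}. complex_of_real (weight k * (node k - node (k - 1))))
      = A + of_real Lambda_offset"
    by (metis diff_conv_add_uminus)
  also have "(\<Sum>k\<in>{1..Suc n}. of_real (weight k) * (L k - L (k - 1)))
      = (\<Sum>k\<le>Suc n. of_real (coeff k) * L k)"
    using sum_by_parts[of "\<lambda>k. of_real (weight k)" L "Suc n"] weight_0 weight_beyond
    by (simp add: coeff_def lessThan_Suc_atMost[symmetric])
  finally show ?thesis by (simp add: log_sum_def L_def)
qed

lemma coeff_sum: "(\<Sum>k\<le>Suc n. coeff k) = 0"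
  using sum_telescope[of weight "Suc n"] weight_0 weight_beyond by (simp add: coeff_def)

lemma coeff_tail_sum:
  assumes "m \<le> Suc n" shows "(\<Sum>k\<in>{m<..Suc n}. coeff k) = weight (Suc m)"
proof -
  have "{..Suc n} = {..m} \<union> {m<..Suc n}" using assms by auto
  then have "(\<Sum>k\<le>Suc n. coeff k) = (\<Sum>k\<le>m. coeff k) + (\<Sum>k\<in>{m<..Suc n}. coeff k)"
    by (metis finite_atMost finite_greaterThanAtMost sum.union_disjoint ivl_disj_int(3))
  then show ?thesis
    using coeff_sum sum_telescope[of weight m] weight_0 by (simp add: coeff_def)
qed

lemma coeff_j: "coeff j = -1"
  using j by (simp add: coeff_def weight_def slope_def field_simps)

lemma weight_Suc_j: "weight (Suc j) = (1 - beta j) / 2"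
  using j by (simp add: weight_def slope_def)

lemma coeff_tail_sum_j: "(\<Sum>k\<in>{j<..Suc n}. coeff k) = (1 - beta j) / 2"
  using coeff_tail_sum[of j] weight_Suc_j j by simp

lemma coeff_tail_condition:
  assumes m: "m \<le> Suc n" "m \<noteq> j"
  shows "(\<Sum>k\<in>{m<..Suc n}. coeff k) \<le> 0 \<or> - coeff m \<le> (\<Sum>k\<in>{m<..Suc n}. coeff k)"
proof -
  have "weight (Suc m) \<le> 0 \<or> 0 \<le> weight m"
  proof (cases "m < j")
    case True
    then have "Suc m \<in> {1..n}" using j by auto
    then have "-1 \<le> beta (Suc m)" using pl by (auto simp: pl_setting_def)
    then show ?thesis using True by (simp add: weight_def slope_def)
  next
    case False
    then have "m - 1 \<in> {1..n}" using j m by auto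
    then have "beta (m - 1) \<le> 1" using pl by (auto simp: pl_setting_def)
    then show ?thesis using False m j by (simp add: weight_def slope_def)
  qed
  then show ?thesis unfolding coeff_tail_sum[OF m(1)] by (auto simp: coeff_def)
qed

lemma exp_node_strict_mono: "k < Suc n \<Longrightarrow> exp (node k) < exp (node (Suc k))"
  using node_strict_mono by simp

lemma nonreal_crit_points_eq_upper_solutions:
  "nonreal_crit_points n Vs V tau chi =
     {z. (Im z > 0 \<and> node_log_sum z = of_real (chi - (V tau / 2 + Lambda_offset)))
       \<or> (Im z < 0 \<and> node_log_sum (cnj z) = of_real (chi - (V tau / 2 + Lambda_offset)))}"
    (is "_ = {z. (Im z > 0 \<and> ?P z) \<or> (Im z < 0 \<and> ?P (cnj z))}")
proof -
  have upper: "Lambda z = of_real (chi - V tau / 2) \<longleftrightarrow> ?P z" if "Im z > 0" for z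
    using Lambda_upper_half_plane[OF that] by (auto simp: algebra_simps)
  have "Im z \<noteq> 0 \<and> Lambda z = of_real (chi - V tau / 2) \<longleftrightarrow> (Im z > 0 \<and> ?P z) \<or> (Im z < 0 \<and> ?P (cnj z))"
    for z
  proof (cases "Im z < 0")
    case True
    have "Lambda z = of_real (chi - V tau / 2) \<longleftrightarrow> Lambda (cnj z) = of_real (chi - V tau / 2)"
      using Lambda_cnj[of z] True by (metis complex_cnj_cnj complex_cnj_complex_of_real less_irrefl)
    then show ?thesis using True upper[of "cnj z"] by auto
  qed (use upper in auto)
  then show ?thesis unfolding nonreal_crit_points_eq by blast
qed

lemma nonreal_crit_points_eventually_empty:
  assumes "beta j = 1 \<or> beta j = -1"
  shows "\<forall>\<^sub>F chi in at_top. nonreal_crit_points n Vs V tau chi = {}"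
proof -
  have "(\<Sum>k\<in>{m<..Suc n}. coeff k) \<le> 0 \<or> - coeff m \<le> (\<Sum>k\<in>{m<..Suc n}. coeff k)"
    if "m \<le> Suc n" for m
    using coeff_tail_condition[OF that] coeff_tail_sum_j coeff_j assms by (cases "m = j") auto
  then have "\<forall>\<^sub>F Y in at_top. \<forall>z. Im z > 0 \<longrightarrow> node_log_sum z \<noteq> of_real Y"
    by (intro log_sum_omits_large_real_values exp_node_strict_mono coeff_sum)
  then show ?thesis
    by (rule eventually_at_top_diff_const[THEN eventually_mono])
      (intro conj_symmetric_set_of_upper_solutions(1)[OF nonreal_crit_points_eq_upper_solutions], blast)
qed

lemma nonreal_crit_points_eventually_conj_pair:
  assumes "beta j \<noteq> 1" "beta j \<noteq> -1"
  shows "\<forall>\<^sub>F chi in at_top. \<exists>w. Im w \<noteq> 0 \<and> nonreal_crit_points n Vs V tau chi = {w, cnj w}"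
proof -
  have "-1 \<le> beta j" "beta j \<le> 1" using pl j by (auto simp: pl_setting_def)
  then have "\<forall>\<^sub>F Y in at_top. \<exists>!z. Im z > 0 \<and> node_log_sum z = of_real Y"
    using assms coeff_tail_sum_j coeff_j j
    by (intro log_sum_takes_large_real_values_once[where j = j] exp_node_strict_mono coeff_sum
        coeff_tail_condition) auto
  then show ?thesis
    by (rule eventually_at_top_diff_const[THEN eventually_mono])
      (rule conj_symmetric_set_of_upper_solutions(2)[OF nonreal_crit_points_eq_upper_solutions])
qed

end

theorem lemma2p2:
  fixes n j :: nat and Vs beta :: "nat \<Rightarrow> real" and V :: "real \<Rightarrow> real" and tau :: real
  assumes "pl_setting n Vs beta V"
    and "1 \<le> j" and "j \<le> n"
    and "Vs (j - 1) < tau" and "tau < Vs j"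
  shows "\<forall>\<^sub>F chi in at_top.
           (if beta j = 1 \<or> beta j = -1
            then nonreal_crit_points n Vs V tau chi = {}
            else (\<exists>w. Im w \<noteq> 0 \<and> nonreal_crit_points n Vs V tau chi = {w, cnj w}))"
proof -
  interpret cut_setting n j Vs beta V tau using assms by unfold_locales
  show ?thesis
    using nonreal_crit_points_eventually_empty nonreal_crit_points_eventually_conj_pair
    by (cases "beta j = 1 \<or> beta j = -1") simp_all
qed

end
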